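(* Let $h>0$, $N\ge2$, $a\in\mathcal{A}_N$, $\phi:\mathbb{R}\to[0,\infty)$, and let $(U^N_t)$ be the $N$-actor system in the representation described in the context. For $\lambda>0$ let $(T_n^\lambda)_{n\ge1}$ be the successive jump times of the Poisson process $t\mapsto\mathbf{N}^a([0,t]\times[0,\lambda])$. Let $l>0$ with $M^>(l)>0$. Then for every $n\ge 1$, $$|U^N_{T_n^{M^>(l)}}(a)|\le l.$$
   Context: $\mathcal{A}_N=\{1,\dots,N\}$. $\Phi(r)=\phi(r)+\phi(-r)$ and $M^>(l)=\inf\{\Phi(r): r>l\}$. Let $(\mathbf{N}^b: b\in\mathcal{A}_N)$ be an i.i.d. family of Poisson random measures on $\mathbb{R}^+\times\mathbb{R}^+$ with intensity $ds\,dz$, and let the system (with arbitrary real initial values) solve, for each $a$, $$U_t^{N}(a)=U_0^{N}(a)-\int_0^t \int_0^{\infty} U_{s-}^{N}(a)\mathbf{1}\{z \leq \Phi(U_{s-}^{N}(a))\}\mathbf{N}^{a}(ds,dz)+ \frac{h}{N}\sum_{b\neq a}\int_0^t \int_0^{\infty}\big(\mathbf{1}\{z \leq \phi(U_{s-}^{N}(b))\}-\mathbf{1}\{\phi(U_{s-}^{N}(b))<z \leq \Phi(U_{s-}^{N}(b))\}\big)\mathbf{N}^{b}(ds,dz).$$ *)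

theory Defs
  imports "HOL-Probability.Probability"
begin

definition quadrant :: "(real \<times> real) set" where
  "quadrant = {0..} \<times> {0..}"

definition fin_borel :: "(real \<times> real) set \<Rightarrow> bool" where
  "fin_borel A \<longleftrightarrow> A \<in> sets lborel \<and> A \<subseteq> quadrant \<and> emeasure lborel A < \<infinity>"

text \<open>A (simple) point process on the quadrant is represented by its random set of atoms
  P b \<omega>; the counting measure N^b(A) is card (P b \<omega> \<inter> A).
  iid_PRM M I P: (P b)_{b in I} is an i.i.d. family of Poisson random measures with
  intensity ds dz (Lebesgue measure) on the quadrant.\<close>
definition iid_PRM ::
  "'w measure \<Rightarrow> 'i set \<Rightarrow> ('i \<Rightarrow> 'w \<Rightarrow> (real \<times> real) set) \<Rightarrow> bool" where
  "iid_PRM M I P \<longleftrightarrow>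
     (\<forall>b\<in>I. \<forall>\<omega>\<in>space M. P b \<omega> \<subseteq> quadrant) \<and>
     (\<forall>b\<in>I. \<forall>A. fin_borel A \<longrightarrow>
        (AE \<omega> in M. finite (P b \<omega> \<inter> A)) \<and>
        (\<lambda>\<omega>. card (P b \<omega> \<inter> A)) \<in> measurable M (count_space UNIV) \<and>
        (\<forall>k::nat. measure M {\<omega>\<in>space M. card (P b \<omega> \<inter> A) = k}
            = (measure lborel A) ^ k / fact k * exp (- measure lborel A))) \<and>
     (\<forall>F. finite F \<longrightarrow> (\<forall>(b,A)\<in>F. b \<in> I \<and> fin_borel A) \<longrightarrow>
        (\<forall>(b,A)\<in>F. \<forall>(b',A')\<in>F. b = b' \<and> A \<noteq> A' \<longrightarrow> A \<inter> A' = {}) \<longrightarrow>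
        prob_space.indep_vars M (\<lambda>_. count_space UNIV) (\<lambda>(b,A) \<omega>. card (P b \<omega> \<inter> A)) F)"

definition Phi :: "(real \<Rightarrow> real) \<Rightarrow> real \<Rightarrow> real" where
  "Phi \<phi> r = \<phi> r + \<phi> (- r)"

definition Mgt :: "(real \<Rightarrow> real) \<Rightarrow> real \<Rightarrow> real" where
  "Mgt \<phi> l = Inf (Phi \<phi> ` {l<..})"

definition left_lim :: "(real \<Rightarrow> real) \<Rightarrow> real \<Rightarrow> real" where
  "left_lim f s = (if s \<le> 0 then f 0 else Lim (at_left s) f)"

definition active_atoms ::
  "(real \<Rightarrow> real) \<Rightarrow> (real \<times> real) set \<Rightarrow> (real \<Rightarrow> real) \<Rightarrow> real \<Rightarrow> (real \<times> real) set" where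
  "active_atoms \<phi> Q u t = {(s,z) \<in> Q. 0 < s \<and> s \<le> t \<and> z \<le> Phi \<phi> (left_lim u s)}"

text \<open>Pathwise meaning of "the system with atom sets Q solves the equation":
  for each actor the path is cadlag on [0,oo), the integrals against the Poisson
  random measures are finite sums over the (finitely many) relevant atoms, and the
  equation holds for all t \<ge> 0.\<close>
definition solves_system ::
  "nat \<Rightarrow> real \<Rightarrow> (real \<Rightarrow> real) \<Rightarrow> (nat \<Rightarrow> (real \<times> real) set) \<Rightarrow> (real \<Rightarrow> nat \<Rightarrow> real) \<Rightarrow> bool" where
  "solves_system N h \<phi> Q U \<longleftrightarrow>
     (\<forall>a\<in>{1..N}.
        (\<forall>t\<ge>0. continuous (at_right t) (\<lambda>s. U s a)) \<and>
        (\<forall>t>0. \<exists>L. ((\<lambda>s. U s a) \<longlongrightarrow> L) (at_left t)) \<and>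
        (\<forall>t\<ge>0. finite (active_atoms \<phi> (Q a) (\<lambda>s. U s a) t))) \<and>
     (\<forall>a\<in>{1..N}. \<forall>t\<ge>0.
        U t a = U 0 a
          - (\<Sum>(s,z)\<in>active_atoms \<phi> (Q a) (\<lambda>s. U s a) t.
               left_lim (\<lambda>s. U s a) s * (if z \<le> Phi \<phi> (left_lim (\<lambda>s. U s a) s) then 1 else 0))
          + h / real N * (\<Sum>b\<in>{1..N} - {a}.
               (\<Sum>(s,z)\<in>active_atoms \<phi> (Q b) (\<lambda>s. U s b) t.
                  (if z \<le> \<phi> (left_lim (\<lambda>s. U s b) s) then 1 else 0)
                - (if \<phi> (left_lim (\<lambda>s. U s b) s) < z \<and> z \<le> Phi \<phi> (left_lim (\<lambda>s. U s b) s)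
                   then 1 else 0))))"

definition jump_time :: "(real \<times> real) set \<Rightarrow> real \<Rightarrow> nat \<Rightarrow> real" where
  "jump_time Q lam n = Inf {t. 0 \<le> t \<and> n \<le> card (Q \<inter> ({0..t} \<times> {0..lam}))}"

end

theory Submission
  imports Defs
begin

(* Let T be the n-th jump time of t \<mapsto> N^a([0,t] \<times> [0,M^>(l)]). Then N^a has an atom (T, z0) with
   z0 \<le> M^>(l), and almost surely T > 0 and no atom of any N^b other than (T, z0) has time
   coordinate T (two independent Poisson measures, or two atoms of one of them, share a time
   with probability zero). Since only finitely many active atoms lie in [0, T], U(a) is
   constant just before T, so the only jump at T is the one caused by (T, z0):
   either z0 \<le> Phi(U_{T-}(a)) and the atom resets U_T(a) to 0, or the atom is inactive,
   U_T(a) = U_{T-}(a) and Phi(U_T(a)) < z0 \<le> M^>(l). As Phi is even and Phi(r) \<ge> M^>(l)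
   for |r| > l, the latter forces |U_T(a)| \<le> l. *)

section \<open>Poisson counts on boxes\<close>

lemma fin_borel_Times:
  fixes A B :: "real set"
  assumes "A \<in> sets lborel" "B \<in> sets lborel" "A \<subseteq> {0..}" "B \<subseteq> {0..}"
    and "emeasure lborel A < \<infinity>" "emeasure lborel B < \<infinity>"
  shows "fin_borel (A \<times> B)"
    and "measure lborel (A \<times> B) = measure lborel A * measure lborel B"
proof -
  have emeasure_Times: "emeasure lborel (A \<times> B) = emeasure lborel A * emeasure lborel B"
    by (metis assms(1,2) lborel.emeasure_pair_measure_Times lborel_prod)
  have "A \<times> B \<in> sets lborel"
    using assms(1,2) by (metis lborel_prod pair_measureI)
  moreover have "emeasure lborel (A \<times> B) < \<infinity>"
    using emeasure_Times assms(5,6) by (simp add: ennreal_mult_less_top)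
  ultimately show "fin_borel (A \<times> B)"
    using assms(3,4) unfolding fin_borel_def quadrant_def by auto
  show "measure lborel (A \<times> B) = measure lborel A * measure lborel B"
    unfolding measure_def emeasure_Times by (simp add: enn2real_mult)
qed

lemma fin_borel_box:
  fixes a b c d :: real
  assumes "0 \<le> a" "a \<le> b" "0 \<le> c" "c \<le> d"
  shows "fin_borel ({a..b} \<times> {c..d})"
    and "measure lborel ({a..b} \<times> {c..d}) = (b - a) * (d - c)"
  using fin_borel_Times[of "{a..b}" "{c..d}"] assms by auto

lemma fin_borel_box_left_open:
  fixes a b c d :: real
  assumes "0 \<le> a" "a \<le> b" "0 \<le> c" "c \<le> d"
  shows "fin_borel ({a<..b} \<times> {c..d})"
    and "measure lborel ({a<..b} \<times> {c..d}) = (b - a) * (d - c)"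
proof -
  have "{a<..b} \<subseteq> {0..}"
    using assms by auto
  then show "fin_borel ({a<..b} \<times> {c..d})"
    and "measure lborel ({a<..b} \<times> {c..d}) = (b - a) * (d - c)"
    using fin_borel_Times[of "{a<..b}" "{c..d}"] assms by auto
qed

lemma iid_PRM_atom_nonneg:
  assumes "iid_PRM M I P" "b \<in> I" "\<omega> \<in> space M" "(s, z) \<in> P b \<omega>"
  shows "0 \<le> s" "0 \<le> z"
  using assms unfolding iid_PRM_def quadrant_def by auto

context prob_space
begin

lemma null_set_if_prob_le_tendsto_0:
  assumes "A \<in> events" "\<And>k. prob A \<le> f k" "f \<longlonglongrightarrow> 0"
  shows "A \<in> null_sets M"
proof -
  have "prob A \<le> 0"
    using assms(2) by (intro LIMSEQ_le_const[OF assms(3)]) auto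
  then show ?thesis
    using assms(1) by (simp add: emeasure_eq_measure null_setsI measure_nonneg antisym)
qed

lemma PRM_count_event:
  assumes "iid_PRM M I P" "b \<in> I" "fin_borel A"
  shows "{\<omega>\<in>space M. R (card (P b \<omega> \<inter> A))} \<in> events"
proof -
  have "(\<lambda>\<omega>. card (P b \<omega> \<inter> A)) \<in> measurable M (count_space UNIV)"
    using assms unfolding iid_PRM_def by blast
  from measurable_sets[OF this, of "{k. R k}"] show ?thesis
    by (simp add: vimage_def Int_def conj_commute)
qed

lemma PRM_AE_finite:
  assumes "iid_PRM M I P" "b \<in> I" "fin_borel A"
  shows "AE \<omega> in M. finite (P b \<omega> \<inter> A)"
  using assms unfolding iid_PRM_def by blast

lemma PRM_count_prob:
  assumes "iid_PRM M I P" "b \<in> I" "fin_borel A"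
  shows "prob {\<omega>\<in>space M. card (P b \<omega> \<inter> A) = k}
           = (measure lborel A) ^ k / fact k * exp (- measure lborel A)"
  using assms unfolding iid_PRM_def by blast

lemma PRM_indep_counts:
  assumes "iid_PRM M I P" "finite F" "\<forall>(b,A)\<in>F. b \<in> I \<and> fin_borel A"
    and "\<forall>(b,A)\<in>F. \<forall>(b',A')\<in>F. b = b' \<and> A \<noteq> A' \<longrightarrow> A \<inter> A' = {}"
  shows "indep_vars (\<lambda>_. count_space UNIV) (\<lambda>(b,A) \<omega>. card (P b \<omega> \<inter> A)) F"
  using assms unfolding iid_PRM_def by blast

lemma PRM_count_less_prob:
  assumes "iid_PRM M I P" "b \<in> I" "fin_borel A"
  shows "prob {\<omega>\<in>space M. card (P b \<omega> \<inter> A) < n}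
           = (\<Sum>k<n. (measure lborel A) ^ k / fact k * exp (- measure lborel A))"
proof (induction n)
  case (Suc n)
  have "{\<omega>\<in>space M. card (P b \<omega> \<inter> A) < Suc n} =
      {\<omega>\<in>space M. card (P b \<omega> \<inter> A) < n} \<union> {\<omega>\<in>space M. card (P b \<omega> \<inter> A) = n}"
    by auto
  moreover have "prob ({\<omega>\<in>space M. card (P b \<omega> \<inter> A) < n} \<union> {\<omega>\<in>space M. card (P b \<omega> \<inter> A) = n})
      = prob {\<omega>\<in>space M. card (P b \<omega> \<inter> A) < n} + prob {\<omega>\<in>space M. card (P b \<omega> \<inter> A) = n}"
    by (rule finite_measure_Union) (use PRM_count_event[OF assms] in auto)
  ultimately show ?case
    using Suc PRM_count_prob[OF assms] by simp
qed simp

lemma PRM_count_ge_prob: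
  assumes "iid_PRM M I P" "b \<in> I" "fin_borel A"
  shows "prob {\<omega>\<in>space M. n \<le> card (P b \<omega> \<inter> A)}
           = 1 - (\<Sum>k<n. (measure lborel A) ^ k / fact k * exp (- measure lborel A))"
proof -
  have "{\<omega>\<in>space M. n \<le> card (P b \<omega> \<inter> A)} = space M - {\<omega>\<in>space M. card (P b \<omega> \<inter> A) < n}"
    by auto
  then show ?thesis
    using PRM_count_event[OF assms] PRM_count_less_prob[OF assms] by (simp add: prob_compl)
qed

lemma PRM_count_ge1_prob_le:
  assumes "iid_PRM M I P" "b \<in> I" "fin_borel A"
  shows "prob {\<omega>\<in>space M. 1 \<le> card (P b \<omega> \<inter> A)} \<le> measure lborel A"
  using PRM_count_ge_prob[OF assms, of 1] exp_ge_add_one_self[of "- measure lborel A"] by simp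

lemma PRM_count_ge2_prob_le:
  assumes "iid_PRM M I P" "b \<in> I" "fin_borel A"
  shows "prob {\<omega>\<in>space M. 2 \<le> card (P b \<omega> \<inter> A)} \<le> (measure lborel A)\<^sup>2"
proof -
  define \<mu> where "\<mu> = measure lborel A"
  have "1 - \<mu>\<^sup>2 = (1 - \<mu>) * (1 + \<mu>)"
    by (simp add: algebra_simps power2_eq_square)
  also have "\<dots> \<le> exp (- \<mu>) * (1 + \<mu>)"
    using exp_ge_add_one_self[of "- \<mu>"] unfolding \<mu>_def by (intro mult_right_mono) auto
  finally show ?thesis
    using PRM_count_ge_prob[OF assms, of 2] unfolding \<mu>_def[symmetric]
    by (simp add: algebra_simps numeral_2_eq_2)
qed

end

section \<open>Jump times of the counting process of a strip\<close>

lemma strip_atoms_eq_at_last_atom: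
  fixes Q :: "(real \<times> real) set"
  assumes "finite (Q \<inter> ({0..t} \<times> {0..lam}))" "Q \<inter> ({0..t} \<times> {0..lam}) \<noteq> {}"
  shows "\<exists>t'\<in>fst ` (Q \<inter> ({0..t} \<times> {0..lam})).
           Q \<inter> ({0..t'} \<times> {0..lam}) = Q \<inter> ({0..t} \<times> {0..lam})"
proof
  define B where "B = Q \<inter> ({0..t} \<times> {0..lam})"
  show "Max (fst ` B) \<in> fst ` B"
    using assms unfolding B_def by simp
  then have "Max (fst ` B) \<le> t"
    unfolding B_def by auto
  moreover have "fst x \<le> Max (fst ` B)" if "x \<in> B" for x
    using that assms(1) unfolding B_def by simp
  ultimately show "Q \<inter> ({0..Max (fst ` B)} \<times> {0..lam}) = B"
    unfolding B_def by auto
qed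

(* The infimum defining the jump time is a minimum over the finitely many atom times. *)
lemma jump_time_in_atoms:
  assumes fin: "finite (Q \<inter> ({0..t1} \<times> {0..lam}))"
    and n: "1 \<le> n" "n \<le> card (Q \<inter> ({0..t1} \<times> {0..lam}))"
  shows "\<exists>z. (jump_time Q lam n, z) \<in> Q \<inter> ({0..t1} \<times> {0..lam})"
proof -
  define S where "S = {t. 0 \<le> t \<and> n \<le> card (Q \<inter> ({0..t} \<times> {0..lam}))}"
  define Ts where "Ts = fst ` (Q \<inter> ({0..t1} \<times> {0..lam})) \<inter> S"
  have last_atom: "\<exists>t'\<in>Ts. t' \<le> t" if "t \<in> S" "t \<le> t1" for t
  proof -
    have "Q \<inter> ({0..t} \<times> {0..lam}) \<subseteq> Q \<inter> ({0..t1} \<times> {0..lam})"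
      using that(2) by auto
    then have "finite (Q \<inter> ({0..t} \<times> {0..lam}))"
      using fin by (rule finite_subset)
    moreover have "Q \<inter> ({0..t} \<times> {0..lam}) \<noteq> {}"
      using that(1) n(1) unfolding S_def by auto
    ultimately obtain x where x: "x \<in> Q \<inter> ({0..t} \<times> {0..lam})"
      and same: "Q \<inter> ({0..fst x} \<times> {0..lam}) = Q \<inter> ({0..t} \<times> {0..lam})"
      using strip_atoms_eq_at_last_atom by blast
    have "fst x \<le> t" "0 \<le> fst x" "x \<in> Q \<inter> ({0..t1} \<times> {0..lam})"
      using x that(2) by (auto simp: mem_Times_iff)
    moreover have "n \<le> card (Q \<inter> ({0..fst x} \<times> {0..lam}))"
      using same that(1) unfolding S_def by simp
    ultimately show ?thesis
      unfolding Ts_def S_def by blast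
  qed
  have "t1 \<in> S"
    using n unfolding S_def by (cases "0 \<le> t1") auto
  then have "Ts \<noteq> {}" "finite Ts"
    using last_atom[of t1] fin unfolding Ts_def by auto
  then have T: "Min Ts \<in> Ts"
    by simp
  have "Inf S = Min Ts"
  proof (rule cInf_eq_minimum)
    show "Min Ts \<in> S"
      using T unfolding Ts_def by auto
    show "Min Ts \<le> t" if "t \<in> S" for t
    proof (cases "t \<le> t1")
      case True
      then show ?thesis
        using last_atom[OF that] \<open>finite Ts\<close> by (meson Min_le order_trans)
    next
      case False
      then show ?thesis
        using T unfolding Ts_def by auto
    qed
  qed
  then show ?thesis
    using T unfolding jump_time_def S_def[symmetric] Ts_def by force
qed

context prob_space
begin

lemma PRM_AE_strip_count_unbounded:
  assumes iid: "iid_PRM M I P" and b: "b \<in> I" and lam: "0 < lam"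
  shows "AE \<omega> in M. \<exists>m::nat. n \<le> card (P b \<omega> \<inter> ({0..real m} \<times> {0..lam}))"
proof (rule AE_I')
  define strip where "strip m = {0..real m} \<times> {0..lam}" for m :: nat
  define poisson_cdf where
    "poisson_cdf m = (\<Sum>k<n. (real m * lam) ^ k / fact k * exp (- (real m * lam)))" for m :: nat
  define bad where "bad = (\<Inter>m. {\<omega>\<in>space M. card (P b \<omega> \<inter> strip m) < n})"
  have strip: "fin_borel (strip m)" "measure lborel (strip m) = real m * lam" for m
    using fin_borel_box[of 0 "real m" 0 lam] lam unfolding strip_def by simp_all
  have "bad \<in> events"
    unfolding bad_def using PRM_count_event[OF iid b strip(1)] by auto
  moreover have "prob bad \<le> poisson_cdf m" for m
  proof -
    have "prob bad \<le> prob {\<omega>\<in>space M. card (P b \<omega> \<inter> strip m) < n}"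
      using PRM_count_event[OF iid b strip(1)] unfolding bad_def by (intro finite_measure_mono) auto
    then show ?thesis
      using PRM_count_less_prob[OF iid b strip(1)] strip(2) unfolding poisson_cdf_def by simp
  qed
  moreover have "poisson_cdf \<longlonglongrightarrow> 0"
    unfolding poisson_cdf_def
  proof (rule tendsto_null_sum)
    fix k
    have "filterlim (\<lambda>m::nat. real m * lam) at_top sequentially"
      by (rule filterlim_at_top_mult_tendsto_pos[OF tendsto_const lam filterlim_real_sequentially])
    then have "(\<lambda>m::nat. (real m * lam) ^ k / exp (real m * lam)) \<longlonglongrightarrow> 0"
      by (rule filterlim_compose[OF tendsto_power_div_exp_0])
    then have "(\<lambda>m::nat. (real m * lam) ^ k / exp (real m * lam) / fact k) \<longlonglongrightarrow> 0"
      by (rule tendsto_divide_zero)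
    then show "(\<lambda>m::nat. (real m * lam) ^ k / fact k * exp (- (real m * lam))) \<longlonglongrightarrow> 0"
      by (simp add: exp_minus field_simps)
  qed
  ultimately show "bad \<in> null_sets M"
    by (rule null_set_if_prob_le_tendsto_0)
  show "{\<omega> \<in> space M. \<not> (\<exists>m::nat. n \<le> card (P b \<omega> \<inter> ({0..real m} \<times> {0..lam})))} \<subseteq> bad"
    unfolding bad_def strip_def by (auto simp: not_le)
qed

lemma PRM_AE_no_atoms_in_null_set:
  assumes iid: "iid_PRM M I P" and b: "b \<in> I" and A: "fin_borel A" "measure lborel A = 0"
  shows "AE \<omega> in M. P b \<omega> \<inter> A = {}"
proof -
  have "prob {\<omega>\<in>space M. card (P b \<omega> \<inter> A) = 0} = 1"
    using PRM_count_prob[OF iid b A(1), of 0] A(2) by simp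
  then have "AE \<omega> in M. \<omega> \<in> {\<omega>\<in>space M. card (P b \<omega> \<inter> A) = 0}"
    by (rule AE_prob_1)
  with PRM_AE_finite[OF iid b A(1)] show ?thesis
    by eventually_elim auto
qed

lemma PRM_AE_jump_time_atom:
  assumes iid: "iid_PRM M I P" and b: "b \<in> I" and lam: "0 < lam"
  shows "AE \<omega> in M. \<forall>n\<ge>1. \<exists>z. (jump_time (P b \<omega>) lam n, z) \<in> P b \<omega>
                          \<and> 0 < jump_time (P b \<omega>) lam n \<and> z \<le> lam"
proof -
  have strip: "fin_borel ({0..real m} \<times> {0..lam})" for m :: nat
    using fin_borel_box[of 0 "real m" 0 lam] lam by simp
  have "AE \<omega> in M. \<forall>m::nat. finite (P b \<omega> \<inter> ({0..real m} \<times> {0..lam}))"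
    unfolding AE_all_countable using PRM_AE_finite[OF iid b strip] by blast
  moreover have "AE \<omega> in M. \<forall>n. \<exists>m::nat. n \<le> card (P b \<omega> \<inter> ({0..real m} \<times> {0..lam}))"
    unfolding AE_all_countable using PRM_AE_strip_count_unbounded[OF iid b lam] by blast
  moreover have "AE \<omega> in M. P b \<omega> \<inter> ({0..0} \<times> {0..lam}) = {}"
    using fin_borel_box[of 0 0 0 lam] lam by (intro PRM_AE_no_atoms_in_null_set[OF iid b]) auto
  ultimately show ?thesis
  proof eventually_elim
    case (elim \<omega>)
    show ?case
    proof (intro allI impI)
      fix n :: nat
      assume "1 \<le> n"
      obtain m :: nat where "n \<le> card (P b \<omega> \<inter> ({0..real m} \<times> {0..lam}))"
        using elim(2) by blast
      with \<open>1 \<le> n\<close> elim(1) obtain z where z: "(jump_time (P b \<omega>) lam n, z) \<in> P b \<omega> \<inter> ({0..real m} \<times> {0..lam})"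
        using jump_time_in_atoms by blast
      moreover have "jump_time (P b \<omega>) lam n \<noteq> 0"
        using z elim(3) by auto
      ultimately show "\<exists>z. (jump_time (P b \<omega>) lam n, z) \<in> P b \<omega> \<and> 0 < jump_time (P b \<omega>) lam n \<and> z \<le> lam"
        by auto
    qed
  qed
qed

end

section \<open>Simultaneous atoms\<close>

definition grid_cell :: "real \<Rightarrow> nat \<Rightarrow> nat \<Rightarrow> (real \<times> real) set" where
  "grid_cell m K j = {real j * m / Suc K<..(real j + 1) * m / Suc K} \<times> {0..m}"

lemma fin_borel_grid_cell:
  assumes "0 < m"
  shows "fin_borel (grid_cell m K j)" "measure lborel (grid_cell m K j) = m * m / Suc K"
proof -
  have width: "(real j + 1) * m / Suc K - real j * m / Suc K = m / Suc K"
    by (simp add: diff_divide_distrib[symmetric] algebra_simps)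
  moreover have "0 \<le> m / Suc K"
    using assms by simp
  ultimately have "real j * m / Suc K \<le> (real j + 1) * m / Suc K"
    by linarith
  then show "fin_borel (grid_cell m K j)" "measure lborel (grid_cell m K j) = m * m / Suc K"
    using fin_borel_box_left_open[of "real j * m / Suc K" "(real j + 1) * m / Suc K" 0 m] assms width
    unfolding grid_cell_def by simp_all
qed

lemma exists_grid_cell:
  assumes "0 < s" "s \<le> m"
  shows "\<exists>j<Suc K. \<forall>z\<in>{0..m}. (s, z) \<in> grid_cell m K j"
proof -
  define j where "j = nat \<lceil>s * Suc K / m\<rceil> - 1"
  have "0 < m"
    using assms by linarith
  then have "0 < s * Suc K / m" "s * Suc K / m \<le> Suc K"
    using assms by (simp_all add: divide_le_eq mult_left_mono mult.commute)
  then have "real j < s * Suc K / m" "s * Suc K / m \<le> real j + 1" "j < Suc K"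
    unfolding j_def by (simp_all add: of_nat_diff ceiling_le_iff) linarith+
  then have "j < Suc K" "real j * m / Suc K < s" "s \<le> (real j + 1) * m / Suc K"
    using assms by (simp_all add: field_simps)
  then show ?thesis
    unfolding grid_cell_def by auto
qed

(* Phrased through counts, which are measurable, rather than through the existence of
   two distinct atoms. *)
definition two_atoms_event ::
  "'w measure \<Rightarrow> ('i \<Rightarrow> 'w \<Rightarrow> (real \<times> real) set) \<Rightarrow> 'i \<Rightarrow> 'i \<Rightarrow> (real \<times> real) set \<Rightarrow> 'w set"
where
  "two_atoms_event M P b b' A =
     (if b = b' then {\<omega>\<in>space M. 2 \<le> card (P b \<omega> \<inter> A)}
      else {\<omega>\<in>space M. 1 \<le> card (P b \<omega> \<inter> A)} \<inter> {\<omega>\<in>space M. 1 \<le> card (P b' \<omega> \<inter> A)})"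

lemma mem_two_atoms_event:
  assumes "\<omega> \<in> space M" "finite (P b \<omega> \<inter> A)" "finite (P b' \<omega> \<inter> A)"
    and "x \<in> P b \<omega> \<inter> A" "x' \<in> P b' \<omega> \<inter> A" "(b, x) \<noteq> (b', x')"
  shows "\<omega> \<in> two_atoms_event M P b b' A"
proof (cases "b = b'")
  case True
  then have "card {x, x'} \<le> card (P b \<omega> \<inter> A)"
    using assms by (intro card_mono) auto
  then show ?thesis
    using True assms unfolding two_atoms_event_def by simp
next
  case False
  then show ?thesis
    using assms unfolding two_atoms_event_def by (auto simp: Suc_le_eq card_gt_0_iff)
qed

context prob_space
begin

lemma two_atoms_event_in_events:
  assumes iid: "iid_PRM M I P" and "b \<in> I" "b' \<in> I" "fin_borel A"
  shows "two_atoms_event M P b b' A \<in> events"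
  using PRM_count_event[OF iid] assms unfolding two_atoms_event_def by auto

lemma prob_two_atoms_event_le:
  assumes iid: "iid_PRM M I P" and b: "b \<in> I" "b' \<in> I" and A: "fin_borel A"
  shows "prob (two_atoms_event M P b b' A) \<le> (measure lborel A)\<^sup>2"
proof (cases "b = b'")
  case True
  then show ?thesis
    using PRM_count_ge2_prob_le[OF iid b(1) A] unfolding two_atoms_event_def by simp
next
  case False
  define X where "X = (\<lambda>(c, B) \<omega>. card (P c \<omega> \<inter> B))"
  have "indep_vars (\<lambda>_. count_space UNIV) X {(b, A), (b', A)}"
    unfolding X_def using b A False by (intro PRM_indep_counts[OF iid]) auto
  then have "prob (\<Inter>i\<in>{(b, A), (b', A)}. X i -` {1..} \<inter> space M)
      = (\<Prod>i\<in>{(b, A), (b', A)}. prob (X i -` {1..} \<inter> space M))"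
    by (rule indep_varsD) auto
  moreover have "X (c, A) -` {1..} \<inter> space M = {\<omega>\<in>space M. 1 \<le> card (P c \<omega> \<inter> A)}" for c
    unfolding X_def by auto
  ultimately have "prob (two_atoms_event M P b b' A)
      = prob {\<omega>\<in>space M. 1 \<le> card (P b \<omega> \<inter> A)} * prob {\<omega>\<in>space M. 1 \<le> card (P b' \<omega> \<inter> A)}"
    using False unfolding two_atoms_event_def by simp
  also have "\<dots> \<le> measure lborel A * measure lborel A"
    using PRM_count_ge1_prob_le[OF iid b(1) A] PRM_count_ge1_prob_le[OF iid b(2) A]
    by (intro mult_mono) auto
  finally show ?thesis
    by (simp add: power2_eq_square)
qed

(* Two atoms with equal time lie in a common strip, and by the union bound the probability
   of this happening for some strip is at most card I^2 * Suc K * (m^2 / Suc K)^2, which tends to 0. *)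
lemma PRM_AE_grid_without_two_atoms:
  assumes iid: "iid_PRM M I P" and I: "finite I" and m: "0 < m"
  shows "AE \<omega> in M. \<exists>K. \<forall>j<Suc K. \<forall>b\<in>I. \<forall>b'\<in>I. \<omega> \<notin> two_atoms_event M P b b' (grid_cell m K j)"
proof -
  define E where "E K = (\<lambda>(j, b, b'). two_atoms_event M P b b' (grid_cell m K j))" for K
  define bad where "bad K = (\<Union>i\<in>{..<Suc K} \<times> I \<times> I. E K i)" for K
  note cell = fin_borel_grid_cell[OF m]
  have E_events: "E K i \<in> events" if "i \<in> {..<Suc K} \<times> I \<times> I" for K i
    using that two_atoms_event_in_events[OF iid _ _ cell(1)] unfolding E_def by auto
  then have bad_events: "bad K \<in> events" for K
    unfolding bad_def using I by auto
  have prob_bad: "prob (bad K) \<le> real (card I) ^ 2 * m ^ 4 / Suc K" for K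
  proof -
    define n where "n = real (Suc K)"
    have "0 < n"
      unfolding n_def by simp
    have card_idx: "real (card ({..<Suc K} \<times> I \<times> I)) = n * real (card I) ^ 2"
      unfolding n_def by (simp add: card_cartesian_product power2_eq_square algebra_simps)
    have "prob (bad K) \<le> (\<Sum>i\<in>{..<Suc K} \<times> I \<times> I. prob (E K i))"
      unfolding bad_def using I E_events by (intro finite_measure_subadditive_finite) auto
    also have "\<dots> \<le> real (card ({..<Suc K} \<times> I \<times> I)) * (m * m / n)\<^sup>2"
      using prob_two_atoms_event_le[OF iid _ _ cell(1)] cell(2) unfolding n_def
      by (intro sum_bounded_above) (auto simp: E_def)
    also have "\<dots> = real (card I) ^ 2 * m ^ 4 / n"
      using \<open>0 < n\<close> unfolding card_idx by (simp add: power2_eq_square field_simps eval_nat_numeral)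
    finally show ?thesis
      unfolding n_def .
  qed
  have "prob (\<Inter>K. bad K) \<le> real (card I) ^ 2 * m ^ 4 / Suc K" for K
  proof -
    have "prob (\<Inter>K. bad K) \<le> prob (bad K)"
      using bad_events by (intro finite_measure_mono) auto
    with prob_bad[of K] show ?thesis
      by linarith
  qed
  moreover have "(\<lambda>K. real (card I) ^ 2 * m ^ 4 / Suc K) \<longlonglongrightarrow> 0"
    by (intro tendsto_divide_0[OF tendsto_const] filterlim_at_top_imp_at_infinity
        filterlim_compose[OF filterlim_real_sequentially filterlim_Suc])
  ultimately have "(\<Inter>K. bad K) \<in> null_sets M"
    using bad_events by (intro null_set_if_prob_le_tendsto_0) auto
  then have "AE \<omega> in M. \<omega> \<notin> (\<Inter>K. bad K)"
    by (rule AE_not_in)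
  then show ?thesis
    by eventually_elim (auto simp: bad_def E_def)
qed

lemma PRM_AE_no_simultaneous_atoms_bounded:
  assumes iid: "iid_PRM M I P" and I: "finite I" and m: "0 < m"
  shows "AE \<omega> in M. \<forall>b\<in>I. \<forall>b'\<in>I. \<forall>s z z'. (s, z) \<in> P b \<omega> \<longrightarrow> (s, z') \<in> P b' \<omega> \<longrightarrow>
           0 < s \<longrightarrow> s \<le> m \<longrightarrow> z \<le> m \<longrightarrow> z' \<le> m \<longrightarrow> b = b' \<and> z = z'"
proof -
  have "AE \<omega> in M. \<forall>K j. \<forall>b\<in>I. finite (P b \<omega> \<inter> grid_cell m K j)"
    using I PRM_AE_finite[OF iid _ fin_borel_grid_cell(1)[OF m]]
    by (simp add: AE_all_countable AE_ball_countable' countable_finite)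
  with PRM_AE_grid_without_two_atoms[OF iid I m] show ?thesis
    using AE_space
  proof eventually_elim
    case (elim \<omega>)
    then obtain K where no_two: "\<forall>j<Suc K. \<forall>b\<in>I. \<forall>b'\<in>I. \<omega> \<notin> two_atoms_event M P b b' (grid_cell m K j)"
      by blast
    show ?case
    proof (intro ballI allI impI)
      fix b b' s z z'
      assume b: "b \<in> I" "b' \<in> I" and atoms: "(s, z) \<in> P b \<omega>" "(s, z') \<in> P b' \<omega>"
        and bounds: "0 < s" "s \<le> m" "z \<le> m" "z' \<le> m"
      obtain j where j: "j < Suc K" "\<forall>z\<in>{0..m}. (s, z) \<in> grid_cell m K j"
        using exists_grid_cell[OF bounds(1,2)] by blast
      then have cells: "(s, z) \<in> grid_cell m K j" "(s, z') \<in> grid_cell m K j"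
        using bounds iid_PRM_atom_nonneg[OF iid _ elim(3)] b atoms by auto
      show "b = b' \<and> z = z'"
      proof (rule ccontr)
        assume "\<not> (b = b' \<and> z = z')"
        then have "\<omega> \<in> two_atoms_event M P b b' (grid_cell m K j)"
          using cells atoms elim(2) b by (intro mem_two_atoms_event[OF elim(3)]) auto
        with no_two j(1) b show False
          by blast
      qed
    qed
  qed
qed

lemma PRM_AE_no_simultaneous_atoms:
  assumes iid: "iid_PRM M I P" and I: "finite I"
  shows "AE \<omega> in M. \<forall>b\<in>I. \<forall>b'\<in>I. \<forall>s z z'. (s, z) \<in> P b \<omega> \<longrightarrow> (s, z') \<in> P b' \<omega> \<longrightarrow>
           0 < s \<longrightarrow> b = b' \<and> z = z'"
proof -
  have "AE \<omega> in M. \<forall>k::nat. \<forall>b\<in>I. \<forall>b'\<in>I. \<forall>s z z'. (s, z) \<in> P b \<omega> \<longrightarrow> (s, z') \<in> P b' \<omega> \<longrightarrow>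
      0 < s \<longrightarrow> s \<le> Suc k \<longrightarrow> z \<le> Suc k \<longrightarrow> z' \<le> Suc k \<longrightarrow> b = b' \<and> z = z'"
    unfolding AE_all_countable using PRM_AE_no_simultaneous_atoms_bounded[OF iid I] by simp
  then show ?thesis
  proof eventually_elim
    case (elim \<omega>)
    show ?case
    proof (intro ballI allI impI)
      fix b b' s z z'
      assume "b \<in> I" "b' \<in> I" "(s, z) \<in> P b \<omega>" "(s, z') \<in> P b' \<omega>" "0 < s"
      moreover obtain k :: nat where "max s (max z z') \<le> real k"
        using real_arch_simple by blast
      ultimately show "b = b' \<and> z = z'"
        using spec[OF elim, of k] by force
    qed
  qed
qed

end

section \<open>Jumps of a solution\<close>

definition reset_jump :: "(real \<Rightarrow> real) \<Rightarrow> (real \<Rightarrow> real) \<Rightarrow> real \<times> real \<Rightarrow> real" where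
  "reset_jump \<phi> u = (\<lambda>(s,z). left_lim u s * (if z \<le> Phi \<phi> (left_lim u s) then 1 else 0))"

definition signal_jump :: "(real \<Rightarrow> real) \<Rightarrow> (real \<Rightarrow> real) \<Rightarrow> real \<times> real \<Rightarrow> real" where
  "signal_jump \<phi> u = (\<lambda>(s,z). (if z \<le> \<phi> (left_lim u s) then 1 else 0)
     - (if \<phi> (left_lim u s) < z \<and> z \<le> Phi \<phi> (left_lim u s) then 1 else 0))"

(* U_t(a) - U_0(a) as given by the equation of the system, with the Poisson integrals
   restricted to the atom sets S b. *)
definition system_increment ::
  "nat \<Rightarrow> real \<Rightarrow> (real \<Rightarrow> real) \<Rightarrow> (real \<Rightarrow> nat \<Rightarrow> real) \<Rightarrow> nat \<Rightarrow> (nat \<Rightarrow> (real \<times> real) set) \<Rightarrow> real"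
where
  "system_increment N h \<phi> U a S =
     h / real N * (\<Sum>b\<in>{1..N} - {a}. sum (signal_jump \<phi> (\<lambda>s. U s b)) (S b))
     - sum (reset_jump \<phi> (\<lambda>s. U s a)) (S a)"

lemma system_increment_Un:
  assumes "a \<in> {1..N}" "\<And>b. b \<in> {1..N} \<Longrightarrow> finite (S b) \<and> finite (S' b) \<and> S b \<inter> S' b = {}"
  shows "system_increment N h \<phi> U a (\<lambda>b. S b \<union> S' b)
           = system_increment N h \<phi> U a S + system_increment N h \<phi> U a S'"
proof -
  have sum_Un: "sum f (S b \<union> S' b) = sum f (S b) + sum f (S' b)" if "b \<in> {1..N}" for f b
    using assms(2)[OF that] by (simp add: sum.union_disjoint)
  have signal_Un: "(\<Sum>b\<in>{1..N} - {a}. sum (signal_jump \<phi> (\<lambda>s. U s b)) (S b \<union> S' b))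
      = (\<Sum>b\<in>{1..N} - {a}. sum (signal_jump \<phi> (\<lambda>s. U s b)) (S b))
        + (\<Sum>b\<in>{1..N} - {a}. sum (signal_jump \<phi> (\<lambda>s. U s b)) (S' b))"
    unfolding sum.distrib[symmetric] by (rule sum.cong) (auto simp: sum_Un)
  show ?thesis
    unfolding system_increment_def sum_Un[OF assms(1)] signal_Un distrib_left by linarith
qed

lemma system_increment_cong:
  assumes "a \<in> {1..N}" "\<And>b. b \<in> {1..N} \<Longrightarrow> S b = S' b"
  shows "system_increment N h \<phi> U a S = system_increment N h \<phi> U a S'"
  using assms unfolding system_increment_def by simp

lemma solves_system_eq:
  assumes "solves_system N h \<phi> Q U" "a \<in> {1..N}" "0 \<le> t"
  shows "U t a = U 0 a + system_increment N h \<phi> U a (\<lambda>b. active_atoms \<phi> (Q b) (\<lambda>s. U s b) t)"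
proof -
  have "U t a = U 0 a
          - (\<Sum>(s,z)\<in>active_atoms \<phi> (Q a) (\<lambda>s. U s a) t.
               left_lim (\<lambda>s. U s a) s * (if z \<le> Phi \<phi> (left_lim (\<lambda>s. U s a) s) then 1 else 0))
          + h / real N * (\<Sum>b\<in>{1..N} - {a}.
               (\<Sum>(s,z)\<in>active_atoms \<phi> (Q b) (\<lambda>s. U s b) t.
                  (if z \<le> \<phi> (left_lim (\<lambda>s. U s b) s) then 1 else 0)
                - (if \<phi> (left_lim (\<lambda>s. U s b) s) < z \<and> z \<le> Phi \<phi> (left_lim (\<lambda>s. U s b) s)
                   then 1 else 0)))"
    using assms unfolding solves_system_def by blast
  then show ?thesis
    unfolding system_increment_def reset_jump_def signal_jump_def by linarith
qed

lemma solves_system_finite_active_atoms: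
  assumes "solves_system N h \<phi> Q U" "b \<in> {1..N}" "0 \<le> t"
  shows "finite (active_atoms \<phi> (Q b) (\<lambda>s. U s b) t)"
  using assms unfolding solves_system_def by blast

lemma active_atoms_le:
  assumes "t \<le> T"
  shows "active_atoms \<phi> Q u t = {x \<in> active_atoms \<phi> Q u T. fst x \<le> t}"
  using assms unfolding active_atoms_def by auto

lemma eventually_at_left_fst_le:
  fixes A :: "(real \<times> 'a) set"
  assumes "finite A"
  shows "eventually (\<lambda>t. {x \<in> A. fst x \<le> t} = {x \<in> A. fst x < T}) (at_left T)"
proof -
  have "eventually (\<lambda>t. fst x < t) (at_left T)" if "fst x < T" for x
    using eventually_at_left_real[OF that] by (rule eventually_mono) simp
  then have "eventually (\<lambda>t. \<forall>x\<in>{x \<in> A. fst x < T}. fst x < t) (at_left T)"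
    using assms by (intro eventually_ball_finite) auto
  moreover have "eventually (\<lambda>t. t < T) (at_left T)"
    by (simp add: eventually_at_filter)
  ultimately show ?thesis
    by eventually_elim force
qed

lemma left_lim_eventually_const:
  assumes "0 < T" "eventually (\<lambda>t. f t = c) (at_left T)"
  shows "left_lim f T = c"
  using assms tendsto_eventually[OF assms(2)] unfolding left_lim_def by (simp add: tendsto_Lim)

lemma solves_system_jump:
  assumes sol: "solves_system N h \<phi> Q U" and a: "a \<in> {1..N}" and T: "0 < T"
  shows "U T a = left_lim (\<lambda>s. U s a) T
           + system_increment N h \<phi> U a (\<lambda>b. {x \<in> active_atoms \<phi> (Q b) (\<lambda>s. U s b) T. fst x = T})"
proof -
  define A where "A b = active_atoms \<phi> (Q b) (\<lambda>s. U s b) T" for b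
  define before where "before b = {x \<in> A b. fst x < T}" for b
  define now where "now b = {x \<in> A b. fst x = T}" for b
  have fin: "finite (A b)" if "b \<in> {1..N}" for b
    using solves_system_finite_active_atoms[OF sol that] T unfolding A_def by simp
  have "eventually (\<lambda>t. \<forall>b\<in>{1..N}. {x \<in> A b. fst x \<le> t} = before b) (at_left T)"
    unfolding before_def using fin by (intro eventually_ball_finite ballI eventually_at_left_fst_le) auto
  moreover have "eventually (\<lambda>t. t \<in> {0<..<T}) (at_left T)"
    using T by (rule eventually_at_left_real)
  ultimately have "eventually (\<lambda>t. U t a = U 0 a + system_increment N h \<phi> U a before) (at_left T)"
  proof eventually_elim
    case (elim t)
    then have "active_atoms \<phi> (Q b) (\<lambda>s. U s b) t = before b" if "b \<in> {1..N}" for b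
      using active_atoms_le[of t T] that unfolding A_def by auto
    then have "system_increment N h \<phi> U a (\<lambda>b. active_atoms \<phi> (Q b) (\<lambda>s. U s b) t)
        = system_increment N h \<phi> U a before"
      by (rule system_increment_cong[OF a])
    then show ?case
      using solves_system_eq[OF sol a, of t] elim by simp
  qed
  then have "left_lim (\<lambda>s. U s a) T = U 0 a + system_increment N h \<phi> U a before"
    by (rule left_lim_eventually_const[OF T])
  moreover have "system_increment N h \<phi> U a A
      = system_increment N h \<phi> U a before + system_increment N h \<phi> U a now"
  proof -
    have "(\<lambda>b. before b \<union> now b) = A"
      unfolding before_def now_def by (auto simp: fun_eq_iff A_def active_atoms_def)
    moreover have "finite (before b) \<and> finite (now b) \<and> before b \<inter> now b = {}"
      if "b \<in> {1..N}" for b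
      using fin[OF that] unfolding before_def now_def by auto
    ultimately show ?thesis
      using system_increment_Un[OF a, of before now] by simp
  qed
  moreover have "U T a = U 0 a + system_increment N h \<phi> U a A"
    using solves_system_eq[OF sol a, of T] T unfolding A_def by simp
  moreover have "(\<lambda>b. {x \<in> active_atoms \<phi> (Q b) (\<lambda>s. U s b) T. fst x = T}) = now"
    unfolding now_def A_def ..
  ultimately show ?thesis
    by (metis add.assoc)
qed

lemma solves_system_at_isolated_atom:
  assumes sol: "solves_system N h \<phi> Q U" and a: "a \<in> {1..N}" and T: "0 < T"
    and atom: "(T, z0) \<in> Q a"
    and isolated: "\<And>b z. b \<in> {1..N} \<Longrightarrow> (T, z) \<in> Q b \<Longrightarrow> b = a \<and> z = z0"
  shows "U T a = (if z0 \<le> Phi \<phi> (left_lim (\<lambda>s. U s a) T) then 0 else left_lim (\<lambda>s. U s a) T)"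
proof -
  define L where "L = left_lim (\<lambda>s. U s a) T"
  define now where "now b = {x \<in> active_atoms \<phi> (Q b) (\<lambda>s. U s b) T. fst x = T}" for b
  have now_atom: "b = a \<and> x = (T, z0)" if "b \<in> {1..N}" "x \<in> now b" for b x
  proof -
    obtain s z where "x = (s, z)" by fastforce
    with that(2) have "x = (T, z)" "(T, z) \<in> Q b"
      unfolding now_def active_atoms_def by auto
    with isolated[OF that(1)] show ?thesis by simp
  qed
  have now_a: "(T, z0) \<in> now a \<longleftrightarrow> z0 \<le> Phi \<phi> L"
    using atom T unfolding now_def active_atoms_def L_def by simp
  have now_eq: "now b = (if b = a \<and> z0 \<le> Phi \<phi> L then {(T, z0)} else {})" if "b \<in> {1..N}" for b
    using now_atom[OF that] now_a by auto
  have "(\<Sum>b\<in>{1..N} - {a}. sum (signal_jump \<phi> (\<lambda>s. U s b)) (now b)) = 0"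
    using now_eq by (intro sum.neutral) auto
  moreover have "sum (reset_jump \<phi> (\<lambda>s. U s a)) (now a) = (if z0 \<le> Phi \<phi> L then L else 0)"
    using now_eq[OF a] unfolding reset_jump_def L_def by simp
  ultimately have "system_increment N h \<phi> U a now = (if z0 \<le> Phi \<phi> L then - L else 0)"
    unfolding system_increment_def by simp
  then show ?thesis
    using solves_system_jump[OF sol a T] unfolding now_def L_def by simp
qed

lemma Mgt_le_Phi:
  assumes "\<And>x. 0 \<le> \<phi> x" "l < r"
  shows "Mgt \<phi> l \<le> Phi \<phi> r"
  unfolding Mgt_def
proof (rule cInf_lower)
  show "Phi \<phi> r \<in> Phi \<phi> ` {l<..}"
    using assms(2) by simp
  show "bdd_below (Phi \<phi> ` {l<..})"
    using assms(1) by (intro bdd_belowI[of _ 0]) (auto simp: Phi_def add_nonneg_nonneg)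
qed

lemma abs_le_if_Phi_less_Mgt:
  assumes "\<And>x. 0 \<le> \<phi> x" "Phi \<phi> r < Mgt \<phi> l"
  shows "\<bar>r\<bar> \<le> l"
proof (rule ccontr)
  assume "\<not> \<bar>r\<bar> \<le> l"
  then have "Mgt \<phi> l \<le> Phi \<phi> \<bar>r\<bar>"
    using Mgt_le_Phi[OF assms(1)] by simp
  also have "Phi \<phi> \<bar>r\<bar> = Phi \<phi> r"
    unfolding Phi_def by (cases "0 \<le> r") auto
  finally show False
    using assms(2) by simp
qed

theorem proposition4:
  fixes M :: "'w measure" and N :: nat and h l :: real and a :: nat
    and \<phi> :: "real \<Rightarrow> real"
    and P :: "nat \<Rightarrow> 'w \<Rightarrow> (real \<times> real) set"
    and U :: "real \<Rightarrow> 'w \<Rightarrow> nat \<Rightarrow> real"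
  assumes "prob_space M"
    and "h > 0" and "N \<ge> 2" and "a \<in> {1..N}"
    and "\<And>x. \<phi> x \<ge> 0"
    and "iid_PRM M {1..N} P"
    and "AE \<omega> in M. solves_system N h \<phi> (\<lambda>b. P b \<omega>) (\<lambda>t. U t \<omega>)"
    and "l > 0" and "Mgt \<phi> l > 0"
  shows "AE \<omega> in M. \<forall>n\<ge>1. \<bar>U (jump_time (P a \<omega>) (Mgt \<phi> l) n) \<omega> a\<bar> \<le> l"
proof -
  interpret prob_space M by fact
  note iid = assms(6) and a = assms(4) and \<phi>_nonneg = assms(5)
  have "AE \<omega> in M. \<forall>n\<ge>1. \<exists>z. (jump_time (P a \<omega>) (Mgt \<phi> l) n, z) \<in> P a \<omega>
           \<and> 0 < jump_time (P a \<omega>) (Mgt \<phi> l) n \<and> z \<le> Mgt \<phi> l"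
    by (rule PRM_AE_jump_time_atom[OF iid a assms(9)])
  moreover have "AE \<omega> in M. \<forall>b\<in>{1..N}. \<forall>b'\<in>{1..N}. \<forall>s z z'. (s, z) \<in> P b \<omega> \<longrightarrow>
           (s, z') \<in> P b' \<omega> \<longrightarrow> 0 < s \<longrightarrow> b = b' \<and> z = z'"
    by (rule PRM_AE_no_simultaneous_atoms[OF iid]) simp
  ultimately show ?thesis
    using assms(7)
  proof eventually_elim
    case (elim \<omega>)
    show ?case
    proof (intro allI impI)
      fix n :: nat
      assume "1 \<le> n"
      define T where "T = jump_time (P a \<omega>) (Mgt \<phi> l) n"
      obtain z0 where atom: "(T, z0) \<in> P a \<omega>" "0 < T" "z0 \<le> Mgt \<phi> l"
        using elim(1) \<open>1 \<le> n\<close> unfolding T_def by blast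
      have "b = a \<and> z = z0" if "b \<in> {1..N}" "(T, z) \<in> P b \<omega>" for b z
        using elim(2) that atom a by blast
      then have "U T \<omega> a = (if z0 \<le> Phi \<phi> (left_lim (\<lambda>s. U s \<omega> a) T) then 0
                           else left_lim (\<lambda>s. U s \<omega> a) T)"
        using solves_system_at_isolated_atom[OF elim(3) a atom(2,1)] by simp
      then show "\<bar>U T \<omega> a\<bar> \<le> l"
        using abs_le_if_Phi_less_Mgt[of \<phi>, OF \<phi>_nonneg] atom(3) assms(8)
        by (cases "z0 \<le> Phi \<phi> (left_lim (\<lambda>s. U s \<omega> a) T)") auto
    qed
  qed
qed

end
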